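(* In the non-binary voting game, let $e(N)$ be any function of $N$. For every $N$ large enough that the number of friendly agents is less than $\mu N$ and the number of unfriendly agents is less than $(1-\mu)N$, and every regular strategy profile $\Sigma^*$ with $N$ agents satisfying $A(\Sigma^* )\ge1-e(N)$, the profile $\Sigma^*$ is an $\varepsilon$-strong Bayes Nash Equilibrium with $\varepsilon=\mathcal{W}B((\mathcal{W}-1)B+1)\,e(N)$.
   Context: Non-binary voting game. $N$ agents each vote for $\mathbf{A}$ or $\mathbf{R}$. World state $W\in\{1,\dots,\mathcal{W}\}$ (unobserved), prior $P_w>0$. Conditional on $W$, each agent independently receives a signal $S_n\in\{1,\dots,M\}$ with $P_{mw}=\Pr[S_n=m\mid W=w]$, satisfying stochastic dominance ($\Pr[S_n\ge m\mid w_1]>\Pr[S_n\ge m\mid w_2]$ for $w_1>w_2$, $m\ge2$). Threshold $\mu\in(0,1)$: $\mathbf{A}$ wins iff at least $\mu N$ agents vote $\mathbf{A}$, else $\mathbf{R}$. Agent $n$ has utility $v_n:\{1,\dots,\mathcal{W}\}\times\{\mathbf{A},\mathbf{R}\}\to\{0,\dots,B\}$ ($B$ a positive integer) with $v_n(w,\mathbf{A})$ strictly increasing, $v_n(w,\mathbf{R})$ strictly decreasing in $w$, and $v_n(w,\mathbf{A})\ne v_n(w,\mathbf{R})$. Constants $\alpha^{\mathbf{A}}_w,\alpha^{\mathbf{R}}_w=1-\alpha^{\mathbf{A}}_w$: exactly $\lfloor\alpha^{\mathbf{R}}_wN\rfloor$ agents prefer $\mathbf{R}$ in state $w$; $\alpha^{\mathbf{A}}_w\ne\mu$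 and rounding does not flip the comparison with $\mu$. Informed majority decision in $w$: $\mathbf{A}$ if $\alpha^{\mathbf{A}}_w>\mu$, else $\mathbf{R}$. $\mathcal{L}=\{w:\alpha^{\mathbf{A}}_w<\mu\}$, $\mathcal{H}=\{w:\alpha^{\mathbf{A}}_w>\mu\}$, both nonempty. For agent $n$, $\mathcal{L}_n=\{w:v_n(w,\mathbf{R})>v_n(w,\mathbf{A})\}$, $\mathcal{H}_n=\{w:v_n(w,\mathbf{A})>v_n(w,\mathbf{R})\}$; friendly if $\mathcal{L}\cap\mathcal{H}_n\ne\emptyset$, unfriendly if $\mathcal{H}\cap\mathcal{L}_n\ne\emptyset$, contingent if $\mathcal{L}_n=\mathcal{L}$. Strategy $\sigma=(\beta_1,\dots,\beta_M)$, $\beta_m$ = probability of voting $\mathbf{A}$ on signal $m$. Regular profile: friendly agents always vote $\mathbf{A}$, unfriendly always vote $\mathbf{R}$. $\lambda^{\mathbf{X}}_w(\Sigma)$: ex-ante probability that $\mathbf{X}$ wins in state $w$. Fidelity $A(\Sigma)=\sum_{w\in\mathcal{L}}P_w\lambda^{\mathbf{R}}_w(\Sigma)+\sum_{w\in\mathcal{H}}P_w\lambda^{\mathbf{A}}_w(\Sigma)$. Expected utility $u_n(\Sigma)=\sum_wP_w(\lambda^{\mathbf{A}}_w(\Sigma)v_n(w,\mathbf{A})+\lambda^{\mathbf{R}}_w(\Sigma)v_n(w,\mathbf{R}))$. $\Sigma$ is an $\varepsilon$-strong Bayes Nash Equilibrium if there is no set $D$ of agents and profile $\Sigma'$ with $\sigma'_n=\sigma_n$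 for $n\notin D$, $u_n(\Sigma')\ge u_n(\Sigma)$ for all $n\in D$ and $u_n(\Sigma')>u_n(\Sigma)+\varepsilon$ for some $n\in D$. *)

theory Defs
  imports Main Complex_Main
begin

text \<open>Non-binary voting game. Agents are indexed by 0..<N, world states by 1..W,
signals by 1..M. A strategy profile Sg assigns to agent n and signal m the
probability Sg n m of voting A.\<close>

datatype outcome = Acc | Rej

definition voteA_prob :: "nat \<Rightarrow> (nat \<Rightarrow> nat \<Rightarrow> real) \<Rightarrow> (nat \<Rightarrow> nat \<Rightarrow> real) \<Rightarrow> nat \<Rightarrow> nat \<Rightarrow> real" where
  "voteA_prob M Ps Sg n w = (\<Sum>m\<in>{1..M}. Ps m w * Sg n m)"

definition vote_set_prob :: "nat \<Rightarrow> nat \<Rightarrow> (nat \<Rightarrow> nat \<Rightarrow> real) \<Rightarrow> (nat \<Rightarrow> nat \<Rightarrow> real) \<Rightarrow> nat \<Rightarrow> nat set \<Rightarrow> real" where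
  "vote_set_prob N M Ps Sg w S =
     (\<Prod>n\<in>S. voteA_prob M Ps Sg n w) * (\<Prod>n\<in>{0..<N} - S. 1 - voteA_prob M Ps Sg n w)"

definition lamA :: "nat \<Rightarrow> real \<Rightarrow> nat \<Rightarrow> (nat \<Rightarrow> nat \<Rightarrow> real) \<Rightarrow> (nat \<Rightarrow> nat \<Rightarrow> real) \<Rightarrow> nat \<Rightarrow> real" where
  "lamA N mu M Ps Sg w =
     (\<Sum>S\<in>{S. S \<subseteq> {0..<N} \<and> real (card S) \<ge> mu * real N}. vote_set_prob N M Ps Sg w S)"

definition lamR :: "nat \<Rightarrow> real \<Rightarrow> nat \<Rightarrow> (nat \<Rightarrow> nat \<Rightarrow> real) \<Rightarrow> (nat \<Rightarrow> nat \<Rightarrow> real) \<Rightarrow> nat \<Rightarrow> real" where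
  "lamR N mu M Ps Sg w =
     (\<Sum>S\<in>{S. S \<subseteq> {0..<N} \<and> real (card S) < mu * real N}. vote_set_prob N M Ps Sg w S)"

definition fidelity :: "nat \<Rightarrow> real \<Rightarrow> nat \<Rightarrow> nat \<Rightarrow> (nat \<Rightarrow> real) \<Rightarrow> (nat \<Rightarrow> nat \<Rightarrow> real) \<Rightarrow> (nat \<Rightarrow> real) \<Rightarrow> (nat \<Rightarrow> nat \<Rightarrow> real) \<Rightarrow> real" where
  "fidelity N mu W M P Ps alphaA Sg =
     (\<Sum>w\<in>{w\<in>{1..W}. alphaA w < mu}. P w * lamR N mu M Ps Sg w)
   + (\<Sum>w\<in>{w\<in>{1..W}. alphaA w > mu}. P w * lamA N mu M Ps Sg w)"

definition exp_util :: "nat \<Rightarrow> real \<Rightarrow> nat \<Rightarrow> nat \<Rightarrow> (nat \<Rightarrow> real) \<Rightarrow> (nat \<Rightarrow> nat \<Rightarrow> real) \<Rightarrow> (nat \<Rightarrow> nat \<Rightarrow> outcome \<Rightarrow> nat) \<Rightarrow> (nat \<Rightarrow> nat \<Rightarrow> real) \<Rightarrow> nat \<Rightarrow> real" where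
  "exp_util N mu W M P Ps v Sg n =
     (\<Sum>w\<in>{1..W}. P w * (lamA N mu M Ps Sg w * real (v n w Acc)
                          + lamR N mu M Ps Sg w * real (v n w Rej)))"

definition valid_profile :: "nat \<Rightarrow> nat \<Rightarrow> (nat \<Rightarrow> nat \<Rightarrow> real) \<Rightarrow> bool" where
  "valid_profile N M Sg \<longleftrightarrow> (\<forall>n<N. \<forall>m\<in>{1..M}. 0 \<le> Sg n m \<and> Sg n m \<le> 1)"

definition friendly :: "real \<Rightarrow> nat \<Rightarrow> (nat \<Rightarrow> real) \<Rightarrow> (nat \<Rightarrow> nat \<Rightarrow> outcome \<Rightarrow> nat) \<Rightarrow> nat \<Rightarrow> bool" where
  "friendly mu W alphaA v n \<longleftrightarrow> (\<exists>w\<in>{1..W}. alphaA w < mu \<and> v n w Acc > v n w Rej)"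

definition unfriendly :: "real \<Rightarrow> nat \<Rightarrow> (nat \<Rightarrow> real) \<Rightarrow> (nat \<Rightarrow> nat \<Rightarrow> outcome \<Rightarrow> nat) \<Rightarrow> nat \<Rightarrow> bool" where
  "unfriendly mu W alphaA v n \<longleftrightarrow> (\<exists>w\<in>{1..W}. alphaA w > mu \<and> v n w Rej > v n w Acc)"

definition regular_profile :: "nat \<Rightarrow> real \<Rightarrow> nat \<Rightarrow> nat \<Rightarrow> (nat \<Rightarrow> real) \<Rightarrow> (nat \<Rightarrow> nat \<Rightarrow> outcome \<Rightarrow> nat) \<Rightarrow> (nat \<Rightarrow> nat \<Rightarrow> real) \<Rightarrow> bool" where
  "regular_profile N mu W M alphaA v Sg \<longleftrightarrow>
     valid_profile N M Sg \<and>
     (\<forall>n<N. friendly mu W alphaA v n \<longrightarrow> (\<forall>m\<in>{1..M}. Sg n m = 1)) \<and>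
     (\<forall>n<N. unfriendly mu W alphaA v n \<longrightarrow> (\<forall>m\<in>{1..M}. Sg n m = 0))"

definition strong_BNE :: "real \<Rightarrow> nat \<Rightarrow> real \<Rightarrow> nat \<Rightarrow> nat \<Rightarrow> (nat \<Rightarrow> real) \<Rightarrow> (nat \<Rightarrow> nat \<Rightarrow> real) \<Rightarrow> (nat \<Rightarrow> nat \<Rightarrow> outcome \<Rightarrow> nat) \<Rightarrow> (nat \<Rightarrow> nat \<Rightarrow> real) \<Rightarrow> bool" where
  "strong_BNE eps N mu W M P Ps v Sg \<longleftrightarrow>
     \<not> (\<exists>D Sg'. D \<subseteq> {0..<N} \<and> valid_profile N M Sg' \<and>
          (\<forall>n<N. n \<notin> D \<longrightarrow> (\<forall>m\<in>{1..M}. Sg' n m = Sg n m)) \<and>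
          (\<forall>n\<in>D. exp_util N mu W M P Ps v Sg' n \<ge> exp_util N mu W M P Ps v Sg n) \<and>
          (\<exists>n\<in>D. exp_util N mu W M P Ps v Sg' n > exp_util N mu W M P Ps v Sg n + eps))"

end

(*
  Write d_n(w) = v_n(w, A) - v_n(w, R), which is nondecreasing in w, and let k be the largest
  state in which the informed majority decision is R; then the low states are exactly 1..k, an
  agent is friendly iff d_n(k) > 0 and unfriendly iff d_n(k+1) < 0.
  For a joint deviation let x be the prior-weighted rise of the acceptance probability over the
  low states and y its drop over the high states. In a low state w the change of utility is at
  most d_n(k) times the rise there plus B times the probability of the wrong decision A, and
  symmetrically in high states; summing, every agent gains at most d_n(k) x - d_n(k+1) y + B (1 - A).
  Friendly agents already vote A, so a coalition of friendly agents has x = 0; dually a coalition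
  of unfriendly agents has y = 0. Otherwise the coalition contains a member with the opposite
  preference in state k (resp. k+1), and the requirement that this member does not lose forces
  x - y (resp. y - x) to be at most B (1 - A). Either way nobody gains more than (B + 1) B (1 - A),
  which is below the claimed epsilon since W >= 2.
*)

theory Submission
  imports Defs
begin

definition exact_success_prob :: "'a set \<Rightarrow> ('a \<Rightarrow> real) \<Rightarrow> 'a set \<Rightarrow> real" where
  "exact_success_prob I p S = (\<Prod>i\<in>S. p i) * (\<Prod>i\<in>I - S. 1 - p i)"

definition at_least_prob :: "'a set \<Rightarrow> ('a \<Rightarrow> real) \<Rightarrow> real \<Rightarrow> real" where
  "at_least_prob I p t = (\<Sum>S | S \<subseteq> I \<and> t \<le> real (card S). exact_success_prob I p S)"

lemma exact_success_prob_nonneg: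
  assumes "\<And>i. i \<in> I \<Longrightarrow> 0 \<le> p i \<and> p i \<le> 1" "S \<subseteq> I"
  shows "0 \<le> exact_success_prob I p S"
  unfolding exact_success_prob_def using assms
  by (intro mult_nonneg_nonneg prod_nonneg) (auto dest: subsetD)

lemma at_least_prob_nonneg:
  assumes "\<And>i. i \<in> I \<Longrightarrow> 0 \<le> p i \<and> p i \<le> 1"
  shows "0 \<le> at_least_prob I p t"
  unfolding at_least_prob_def using assms by (intro sum_nonneg exact_success_prob_nonneg) auto

lemma at_least_prob_add_less:
  assumes "finite I"
  shows "at_least_prob I p t + (\<Sum>S | S \<subseteq> I \<and> real (card S) < t. exact_success_prob I p S) = 1"
proof -
  have "at_least_prob I p t + (\<Sum>S | S \<subseteq> I \<and> real (card S) < t. exact_success_prob I p S)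
      = (\<Sum>S\<in>Pow I. exact_success_prob I p S)"
    unfolding at_least_prob_def using assms
    by (subst sum.union_disjoint[symmetric]) (auto intro: sum.cong)
  also have "\<dots> = (\<Prod>i\<in>I. p i + (1 - p i))"
    unfolding exact_success_prob_def by (rule prod_add[OF assms, symmetric])
  finally show ?thesis by simp
qed

lemma at_least_prob_antimono:
  assumes "finite I" "\<And>i. i \<in> I \<Longrightarrow> 0 \<le> p i \<and> p i \<le> 1" "s \<le> t"
  shows "at_least_prob I p t \<le> at_least_prob I p s"
  unfolding at_least_prob_def using assms
  by (intro sum_mono2 exact_success_prob_nonneg) auto

lemma exact_success_prob_insert:
  assumes "finite I" "i \<notin> I" "S \<subseteq> I"
  shows "exact_success_prob (insert i I) p S = (1 - p i) * exact_success_prob I p S"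
    and "exact_success_prob (insert i I) p (insert i S) = p i * exact_success_prob I p S"
proof -
  have "insert i I - S = insert i (I - S)" "insert i I - insert i S = I - S"
    using assms by auto
  moreover have "finite S" "i \<notin> S" using assms finite_subset by auto
  ultimately show "exact_success_prob (insert i I) p S = (1 - p i) * exact_success_prob I p S"
    and "exact_success_prob (insert i I) p (insert i S) = p i * exact_success_prob I p S"
    unfolding exact_success_prob_def using assms by auto
qed

lemma at_least_prob_Pow:
  assumes "finite I"
  shows "at_least_prob I p t
           = (\<Sum>S\<in>Pow I. if t \<le> real (card S) then exact_success_prob I p S else 0)"
  unfolding at_least_prob_def sum.inter_filter[OF finite_Pow_iff[THEN iffD2, OF assms], symmetric]
  by (rule sum.cong) auto

lemma at_least_prob_insert:
  assumes "finite I" "i \<notin> I"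
  shows "at_least_prob (insert i I) p t
           = p i * at_least_prob I p (t - 1) + (1 - p i) * at_least_prob I p t"
proof -
  let ?f = "exact_success_prob (insert i I) p"
  have inj: "inj_on (insert i) (Pow I)"
    using assms by (auto intro!: inj_onI)
  have "at_least_prob (insert i I) p t
      = (\<Sum>S\<in>Pow I. if t \<le> real (card S) then ?f S else 0)
        + (\<Sum>S\<in>Pow I. if t \<le> real (card (insert i S)) then ?f (insert i S) else 0)"
    unfolding at_least_prob_Pow[OF finite.insertI[OF assms(1)]] Pow_insert
    using assms by (subst sum.union_disjoint) (auto simp: sum.reindex[OF inj])
  also have "\<dots> = (1 - p i) * at_least_prob I p t + p i * at_least_prob I p (t - 1)"
    unfolding at_least_prob_Pow[OF assms(1)] sum_distrib_left
    using assms exact_success_prob_insert[OF assms]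
    by (intro arg_cong2[where f="(+)"] sum.cong)
      (auto simp: card_insert_if finite_subset subset_iff)
  finally show ?thesis by simp
qed

lemma at_least_prob_mono:
  assumes "finite I"
    and "\<And>i. i \<in> I \<Longrightarrow> 0 \<le> p i \<and> p i \<le> q i \<and> q i \<le> 1"
  shows "at_least_prob I p t \<le> at_least_prob I q t"
  using assms
proof (induction I arbitrary: t rule: finite_induct)
  case empty
  then show ?case by (simp add: at_least_prob_def exact_success_prob_def)
next
  case (insert i I)
  have p_i: "0 \<le> p i" "p i \<le> q i" "q i \<le> 1" "p i \<le> 1"
    using insert.prems by (auto intro: order_trans)
  have q_drop: "at_least_prob I q t \<le> at_least_prob I q (t - 1)"
    using insert.hyps insert.prems by (intro at_least_prob_antimono) (auto intro: order_trans)
  have "at_least_prob (insert i I) p t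
      = p i * at_least_prob I p (t - 1) + (1 - p i) * at_least_prob I p t"
    using insert.hyps by (rule at_least_prob_insert)
  also have "\<dots> \<le> p i * at_least_prob I q (t - 1) + (1 - p i) * at_least_prob I q t"
    using insert.IH insert.prems p_i by (intro add_mono mult_left_mono) auto
  also have "\<dots> \<le> q i * at_least_prob I q (t - 1) + (1 - q i) * at_least_prob I q t"
    using mult_left_mono[OF q_drop, of "q i - p i"] p_i by (simp add: algebra_simps)
  also have "\<dots> = at_least_prob (insert i I) q t"
    using insert.hyps by (rule at_least_prob_insert[symmetric])
  finally show ?case .
qed

lemma lamA_eq_at_least_prob:
  "lamA N mu M Ps Sg w = at_least_prob {0..<N} (\<lambda>n. voteA_prob M Ps Sg n w) (mu * real N)"
  unfolding lamA_def at_least_prob_def exact_success_prob_def vote_set_prob_def ..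

lemma lamR_eq_1_minus_lamA: "lamR N mu M Ps Sg w = 1 - lamA N mu M Ps Sg w"
  using at_least_prob_add_less[of "{0..<N}" "\<lambda>n. voteA_prob M Ps Sg n w" "mu * real N"]
  unfolding lamA_eq_at_least_prob lamR_def exact_success_prob_def vote_set_prob_def by simp

lemma voteA_prob_bounds:
  assumes "valid_profile N M Sg"
    and "\<And>m. m \<in> {1..M} \<Longrightarrow> 0 \<le> Ps m w" "(\<Sum>m\<in>{1..M}. Ps m w) = 1" "n < N"
  shows "0 \<le> voteA_prob M Ps Sg n w \<and> voteA_prob M Ps Sg n w \<le> 1"
proof
  show "0 \<le> voteA_prob M Ps Sg n w"
    using assms unfolding voteA_prob_def valid_profile_def
    by (intro sum_nonneg mult_nonneg_nonneg) auto
  have "voteA_prob M Ps Sg n w \<le> (\<Sum>m\<in>{1..M}. Ps m w)"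
    using assms unfolding voteA_prob_def valid_profile_def by (intro sum_mono mult_left_le) auto
  then show "voteA_prob M Ps Sg n w \<le> 1"
    using assms by simp
qed

lemma lamA_bounds:
  assumes "valid_profile N M Sg"
    and "\<And>m. m \<in> {1..M} \<Longrightarrow> 0 \<le> Ps m w" "(\<Sum>m\<in>{1..M}. Ps m w) = 1"
  shows "0 \<le> lamA N mu M Ps Sg w \<and> lamA N mu M Ps Sg w \<le> 1"
proof
  have p: "\<And>n. n \<in> {0..<N} \<Longrightarrow> 0 \<le> voteA_prob M Ps Sg n w \<and> voteA_prob M Ps Sg n w \<le> 1"
    using voteA_prob_bounds[where Sg=Sg and w=w] assms by simp
  show "0 \<le> lamA N mu M Ps Sg w"
    unfolding lamA_eq_at_least_prob by (rule at_least_prob_nonneg[OF p])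
  have "0 \<le> lamR N mu M Ps Sg w"
    unfolding lamR_def vote_set_prob_def exact_success_prob_def[symmetric]
    by (intro sum_nonneg exact_success_prob_nonneg[OF p]) auto
  then show "lamA N mu M Ps Sg w \<le> 1"
    by (simp add: lamR_eq_1_minus_lamA)
qed

lemma lamA_mono:
  assumes "valid_profile N M Sg" "valid_profile N M Sg'"
    and "\<And>m. m \<in> {1..M} \<Longrightarrow> 0 \<le> Ps m w" "(\<Sum>m\<in>{1..M}. Ps m w) = 1"
    and "\<And>n. n < N \<Longrightarrow> voteA_prob M Ps Sg n w \<le> voteA_prob M Ps Sg' n w"
  shows "lamA N mu M Ps Sg w \<le> lamA N mu M Ps Sg' w"
  unfolding lamA_eq_at_least_prob
  using assms voteA_prob_bounds[where Sg=Sg and w=w] voteA_prob_bounds[where Sg=Sg' and w=w]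
  by (intro at_least_prob_mono) auto

lemma exp_util_diff:
  "exp_util N mu W M P Ps v Sg' n - exp_util N mu W M P Ps v Sg n
     = (\<Sum>w\<in>{1..W}. P w * ((lamA N mu M Ps Sg' w - lamA N mu M Ps Sg w)
                                * (real (v n w Acc) - real (v n w Rej))))"
  unfolding exp_util_def lamR_eq_1_minus_lamA sum_subtractf[symmetric]
  by (rule sum.cong) (simp_all add: algebra_simps)

lemma acceptance_gain_le:
  fixes a a' d d_max B :: real
  assumes "0 \<le> a" "0 \<le> a'" "0 \<le> B" "- B \<le> d" "d \<le> d_max"
  shows "(a' - a) * d \<le> d_max * max (a' - a) 0 + B * a"
proof (cases "a \<le> a'")
  case True
  then have "(a' - a) * d \<le> (a' - a) * d_max"
    using assms by (intro mult_left_mono) auto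
  moreover have "0 \<le> B * a"
    using assms by simp
  ultimately show ?thesis
    using True by (simp add: mult.commute)
next
  case False
  then have "(a' - a) * d \<le> (a - a') * B"
    using mult_left_mono_neg[of "- B" d "a' - a"] assms by (simp add: algebra_simps)
  also have "\<dots> \<le> a * B"
    using assms by (intro mult_right_mono) auto
  finally show ?thesis
    using False by (simp add: mult.commute)
qed

lemma opposed_member_bound:
  fixes a a' b b' x y c B :: real
  assumes "1 \<le> a" "a \<le> B" "a \<le> a'" "b \<le> -1" "b \<le> b'" "0 \<le> x" "0 \<le> y" "0 \<le> c"
    and "0 \<le> b * x - b' * y + c"
  shows "a * x - a' * y + c \<le> (B + 1) * c"
proof -
  have "(- b) * (x - y) \<le> c"
    using assms mult_right_mono[of b b' y] by (simp add: algebra_simps)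
  then have "x - y \<le> c"
    using assms mult_right_mono[of 1 "- b" "x - y"] by (cases "0 \<le> x - y") auto
  then have "a * (x - y) \<le> B * c"
  proof (cases "0 \<le> x - y")
    case True
    then show ?thesis
      using \<open>x - y \<le> c\<close> assms by (intro mult_mono) auto
  next
    case False
    then have "a * (x - y) \<le> 0"
      using assms by (intro mult_nonneg_nonpos) auto
    also have "0 \<le> B * c"
      using assms by simp
    finally show ?thesis .
  qed
  moreover have "a * y \<le> a' * y"
    using assms by (intro mult_right_mono) auto
  ultimately show ?thesis
    by (simp add: algebra_simps)
qed

lemma friendly_deviator_bound:
  fixes a a' :: "'n \<Rightarrow> real" and x y c B :: real
  assumes mono: "\<And>n. n \<in> D \<Longrightarrow> a n \<le> a' n"
    and gap: "\<And>n. n \<in> D \<Longrightarrow> 1 \<le> \<bar>a n\<bar> \<and> \<bar>a n\<bar> \<le> B"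
    and partner: "\<And>n. n \<in> D \<Longrightarrow> 0 \<le> a n * x - a' n * y + c"
    and no_rise: "\<forall>n\<in>D. 0 < a n \<Longrightarrow> x = 0"
    and "0 \<le> x" "0 \<le> y" "0 \<le> c" "g \<in> D" "0 < a g"
  shows "a g * x - a' g * y + c \<le> (B + 1) * c"
proof (cases "\<forall>n\<in>D. 0 < a n")
  case True
  have "0 \<le> B * c"
    using gap[OF \<open>g \<in> D\<close>] \<open>0 \<le> c\<close> by simp
  moreover have "0 \<le> a' g * y"
    using mono[OF \<open>g \<in> D\<close>] \<open>0 < a g\<close> \<open>0 \<le> y\<close> by simp
  ultimately show ?thesis
    using no_rise[OF True] by (simp add: algebra_simps)
next
  case False
  then obtain n where "n \<in> D" "a n \<le> 0"
    by auto
  moreover have "1 \<le> a g" "a g \<le> B"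
    using gap[OF \<open>g \<in> D\<close>] \<open>0 < a g\<close> by auto
  ultimately show ?thesis
    using assms gap[OF \<open>n \<in> D\<close>] mono[OF \<open>n \<in> D\<close>] partner[OF \<open>n \<in> D\<close>]
      mono[OF \<open>g \<in> D\<close>]
    by (intro opposed_member_bound[where b = "a n" and b' = "a' n"]) auto
qed

lemma bound_le_epsilon_coefficient:
  assumes "2 \<le> W"
  shows "(real B + 1) * real B \<le> real W * real B * ((real W - 1) * real B + 1)"
proof -
  have "(real B + 1) * real B \<le> ((real W - 1) * real B + 1) * real B"
    using assms mult_right_mono[of 1 "real W - 1" "real B"] by (intro mult_right_mono) auto
  also have "\<dots> \<le> real W * (((real W - 1) * real B + 1) * real B)"
    using assms mult_right_mono[of 1 "real W" "((real W - 1) * real B + 1) * real B"] by simp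
  finally show ?thesis
    by (simp add: ac_simps)
qed

locale voting_game =
  fixes N W M B :: nat and mu :: real
    and P :: "nat \<Rightarrow> real" and Ps :: "nat \<Rightarrow> nat \<Rightarrow> real"
    and v :: "nat \<Rightarrow> nat \<Rightarrow> outcome \<Rightarrow> nat" and alphaA :: "nat \<Rightarrow> real"
  assumes prior_nonneg: "\<And>w. w \<in> {1..W} \<Longrightarrow> 0 \<le> P w"
    and prior_sum: "(\<Sum>w\<in>{1..W}. P w) = 1"
    and signal_nonneg: "\<And>w m. w \<in> {1..W} \<Longrightarrow> m \<in> {1..M} \<Longrightarrow> 0 \<le> Ps m w"
    and signal_sum: "\<And>w. w \<in> {1..W} \<Longrightarrow> (\<Sum>m\<in>{1..M}. Ps m w) = 1"
    and utility_le: "\<And>n w x. n < N \<Longrightarrow> w \<in> {1..W} \<Longrightarrow> v n w x \<le> B"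
    and utility_Acc_increasing: "\<And>n w1 w2. n < N \<Longrightarrow> w1 \<in> {1..W} \<Longrightarrow> w2 \<in> {1..W} \<Longrightarrow>
        w1 < w2 \<Longrightarrow> v n w1 Acc < v n w2 Acc"
    and utility_Rej_decreasing: "\<And>n w1 w2. n < N \<Longrightarrow> w1 \<in> {1..W} \<Longrightarrow> w2 \<in> {1..W} \<Longrightarrow>
        w1 < w2 \<Longrightarrow> v n w2 Rej < v n w1 Rej"
    and utility_Acc_neq_Rej: "\<And>n w. n < N \<Longrightarrow> w \<in> {1..W} \<Longrightarrow> v n w Acc \<noteq> v n w Rej"
    and card_prefer_Rej: "\<And>w. w \<in> {1..W} \<Longrightarrow>
        card {n\<in>{0..<N}. v n w Rej > v n w Acc} = nat \<lfloor>(1 - alphaA w) * real N\<rfloor>"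
    and alpha_neq_mu: "\<And>w. w \<in> {1..W} \<Longrightarrow> alphaA w \<noteq> mu"
    and alpha_rounding: "\<And>w. w \<in> {1..W} \<Longrightarrow>
        mu * real N \<le> real (N - nat \<lfloor>(1 - alphaA w) * real N\<rfloor>) \<longleftrightarrow> mu < alphaA w"
    and low_state_exists: "\<exists>w\<in>{1..W}. alphaA w < mu"
    and high_state_exists: "\<exists>w\<in>{1..W}. mu < alphaA w"
begin

abbreviation accept_prob :: "(nat \<Rightarrow> nat \<Rightarrow> real) \<Rightarrow> nat \<Rightarrow> real" where
  "accept_prob Sg w \<equiv> lamA N mu M Ps Sg w"

abbreviation util :: "(nat \<Rightarrow> nat \<Rightarrow> real) \<Rightarrow> nat \<Rightarrow> real" where
  "util Sg n \<equiv> exp_util N mu W M P Ps v Sg n"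

definition low_states :: "nat set" where
  "low_states = {w\<in>{1..W}. alphaA w < mu}"

definition high_states :: "nat set" where
  "high_states = {w\<in>{1..W}. mu < alphaA w}"

definition top_low :: nat where
  "top_low = Max low_states"

definition pref_gap :: "nat \<Rightarrow> nat \<Rightarrow> real" where
  "pref_gap n w = real (v n w Acc) - real (v n w Rej)"

lemma pref_gap_mono:
  assumes "n < N" "w1 \<in> {1..W}" "w2 \<in> {1..W}" "w1 \<le> w2"
  shows "pref_gap n w1 \<le> pref_gap n w2"
  using assms utility_Acc_increasing[of n w1 w2] utility_Rej_decreasing[of n w1 w2]
  unfolding pref_gap_def by (cases "w1 = w2") auto

lemma abs_pref_gap_le:
  assumes "n < N" "w \<in> {1..W}"
  shows "\<bar>pref_gap n w\<bar> \<le> B"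
  using assms utility_le[of n w Acc] utility_le[of n w Rej] unfolding pref_gap_def by auto

lemma one_le_abs_pref_gap:
  assumes "n < N" "w \<in> {1..W}"
  shows "1 \<le> \<bar>pref_gap n w\<bar>"
  using assms utility_Acc_neq_Rej[of n w] unfolding pref_gap_def by auto

lemma high_states_upward_closed:
  assumes "w1 \<in> high_states" "w1 \<le> w2" "w2 \<le> W"
  shows "w2 \<in> high_states"
proof -
  have w: "w1 \<in> {1..W}" "w2 \<in> {1..W}" "mu < alphaA w1"
    using assms unfolding high_states_def by auto
  have "{n\<in>{0..<N}. v n w2 Rej > v n w2 Acc} \<subseteq> {n\<in>{0..<N}. v n w1 Rej > v n w1 Acc}"
  proof (intro subsetI)
    fix n assume "n \<in> {n\<in>{0..<N}. v n w2 Rej > v n w2 Acc}"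
    then have "n < N" "pref_gap n w2 < 0"
      unfolding pref_gap_def by auto
    then have "pref_gap n w1 < 0"
      using pref_gap_mono[OF _ w(1,2) assms(2)] by fastforce
    then show "n \<in> {n\<in>{0..<N}. v n w1 Rej > v n w1 Acc}"
      using \<open>n < N\<close> unfolding pref_gap_def by simp
  qed
  then have "card {n\<in>{0..<N}. v n w2 Rej > v n w2 Acc} \<le> card {n\<in>{0..<N}. v n w1 Rej > v n w1 Acc}"
    by (intro card_mono) auto
  then have "nat \<lfloor>(1 - alphaA w2) * real N\<rfloor> \<le> nat \<lfloor>(1 - alphaA w1) * real N\<rfloor>"
    unfolding card_prefer_Rej[OF w(1)] card_prefer_Rej[OF w(2)] .
  then have "mu * real N \<le> real (N - nat \<lfloor>(1 - alphaA w2) * real N\<rfloor>)"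
    using alpha_rounding[OF w(1)] w(3) by linarith
  then show ?thesis
    using alpha_rounding[OF w(2)] w(2) unfolding high_states_def by simp
qed

lemma high_states_eq_diff: "high_states = {1..W} - low_states"
proof (intro equalityI subsetI)
  fix w assume "w \<in> high_states"
  then show "w \<in> {1..W} - low_states"
    unfolding high_states_def low_states_def by auto
next
  fix w assume w: "w \<in> {1..W} - low_states"
  then have "alphaA w \<noteq> mu"
    by (intro alpha_neq_mu) auto
  with w show "w \<in> high_states"
    unfolding high_states_def low_states_def by auto
qed

lemma states_split:
  shows "1 \<le> top_low" "top_low < W"
    and "low_states = {1..top_low}" "high_states = {Suc top_low..W}"
proof -
  have fin: "finite low_states" and ne: "low_states \<noteq> {}"
    using low_state_exists unfolding low_states_def by auto
  have top: "top_low \<in> low_states" and le_top: "\<And>w. w \<in> low_states \<Longrightarrow> w \<le> top_low"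
    unfolding top_low_def using Max_in[OF fin ne] Max_ge[OF fin] by auto
  then show "1 \<le> top_low"
    unfolding low_states_def by simp
  have "top_low \<le> W"
    using top unfolding low_states_def by simp
  show low: "low_states = {1..top_low}"
  proof
    show "low_states \<subseteq> {1..top_low}"
      using le_top unfolding low_states_def by auto
    show "{1..top_low} \<subseteq> low_states"
    proof
      fix w assume w: "w \<in> {1..top_low}"
      show "w \<in> low_states"
      proof (rule ccontr)
        assume "w \<notin> low_states"
        then have "w \<in> high_states"
          using w \<open>top_low \<le> W\<close> unfolding high_states_eq_diff by auto
        then have "top_low \<in> high_states"
          using high_states_upward_closed[of w top_low] w \<open>top_low \<le> W\<close> by auto
        then show False
          using top unfolding high_states_eq_diff by simp
      qed
    qed
  qed
  show high: "high_states = {Suc top_low..W}"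
    unfolding high_states_eq_diff low by auto
  obtain w where "w \<in> high_states"
    using high_state_exists unfolding high_states_def by auto
  then show "top_low < W"
    unfolding high by simp
qed

lemma friendly_iff:
  assumes "n < N"
  shows "friendly mu W alphaA v n \<longleftrightarrow> 0 < pref_gap n top_low"
proof
  assume "friendly mu W alphaA v n"
  then obtain w where "w \<in> low_states" "0 < pref_gap n w"
    unfolding friendly_def low_states_def pref_gap_def by auto
  then show "0 < pref_gap n top_low"
    using pref_gap_mono[OF assms, of w top_low] states_split by auto
next
  assume "0 < pref_gap n top_low"
  moreover have "top_low \<in> low_states"
    using states_split by auto
  ultimately show "friendly mu W alphaA v n"
    unfolding friendly_def low_states_def pref_gap_def by auto
qed

lemma unfriendly_iff:
  assumes "n < N"
  shows "unfriendly mu W alphaA v n \<longleftrightarrow> pref_gap n (Suc top_low) < 0"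
proof
  assume "unfriendly mu W alphaA v n"
  then obtain w where "w \<in> high_states" "pref_gap n w < 0"
    unfolding unfriendly_def high_states_def pref_gap_def by auto
  then show "pref_gap n (Suc top_low) < 0"
    using pref_gap_mono[OF assms, of "Suc top_low" w] states_split by auto
next
  assume "pref_gap n (Suc top_low) < 0"
  moreover have "Suc top_low \<in> high_states"
    using states_split by auto
  ultimately show "unfriendly mu W alphaA v n"
    unfolding unfriendly_def high_states_def pref_gap_def by auto
qed

lemma states_subset: "low_states \<subseteq> {1..W}" "high_states \<subseteq> {1..W}"
  unfolding low_states_def high_states_def by auto

lemma accept_prob_bounds:
  assumes "valid_profile N M Sg" "w \<in> {1..W}"
  shows "0 \<le> accept_prob Sg w \<and> accept_prob Sg w \<le> 1"
  using assms signal_nonneg signal_sum by (intro lamA_bounds) auto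

lemma states_disjoint_union:
  "{1..W} = low_states \<union> high_states" "low_states \<inter> high_states = {}"
  using states_split by auto

definition error_prob :: "(nat \<Rightarrow> nat \<Rightarrow> real) \<Rightarrow> real" where
  "error_prob Sg = (\<Sum>w\<in>low_states. P w * accept_prob Sg w)
                 + (\<Sum>w\<in>high_states. P w * (1 - accept_prob Sg w))"

lemma fidelity_eq_1_minus_error_prob:
  "fidelity N mu W M P Ps alphaA Sg = 1 - error_prob Sg"
proof -
  have "fidelity N mu W M P Ps alphaA Sg + error_prob Sg
      = (\<Sum>w\<in>low_states. P w) + (\<Sum>w\<in>high_states. P w)"
    unfolding fidelity_def error_prob_def low_states_def[symmetric] high_states_def[symmetric]
      lamR_eq_1_minus_lamA
    by (simp add: algebra_simps sum_subtractf)
  also have "\<dots> = (\<Sum>w\<in>{1..W}. P w)"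
    unfolding states_disjoint_union(1)
    by (rule sum.union_disjoint[symmetric]) (simp_all add: states_split states_disjoint_union(2))
  finally show ?thesis
    using prior_sum by simp
qed

lemma error_prob_nonneg:
  assumes "valid_profile N M Sg"
  shows "0 \<le> error_prob Sg"
proof -
  have "0 \<le> P w \<and> 0 \<le> accept_prob Sg w \<and> accept_prob Sg w \<le> 1"
    if "w \<in> low_states \<union> high_states" for w
    using that accept_prob_bounds[OF assms] prior_nonneg states_disjoint_union by blast
  then show ?thesis
    unfolding error_prob_def by (intro add_nonneg_nonneg sum_nonneg mult_nonneg_nonneg) auto
qed

definition accept_rise :: "(nat \<Rightarrow> nat \<Rightarrow> real) \<Rightarrow> (nat \<Rightarrow> nat \<Rightarrow> real) \<Rightarrow> real" where
  "accept_rise Sg Sg' = (\<Sum>w\<in>low_states. P w * max (accept_prob Sg' w - accept_prob Sg w) 0)"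

definition accept_drop :: "(nat \<Rightarrow> nat \<Rightarrow> real) \<Rightarrow> (nat \<Rightarrow> nat \<Rightarrow> real) \<Rightarrow> real" where
  "accept_drop Sg Sg' = (\<Sum>w\<in>high_states. P w * max (accept_prob Sg w - accept_prob Sg' w) 0)"

lemma util_gain_le:
  assumes valid: "valid_profile N M Sg" and valid': "valid_profile N M Sg'" and "n < N"
  shows "util Sg' n - util Sg n
           \<le> pref_gap n top_low * accept_rise Sg Sg' - pref_gap n (Suc top_low) * accept_drop Sg Sg'
              + real B * error_prob Sg"
proof -
  let ?a = "accept_prob Sg" and ?a' = "accept_prob Sg'"
  let ?gain = "\<lambda>w. P w * ((?a' w - ?a w) * pref_gap n w)"
  have state: "w \<in> {1..W}" "0 \<le> P w" "0 \<le> ?a w \<and> ?a w \<le> 1" "0 \<le> ?a' w \<and> ?a' w \<le> 1"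
    "\<bar>pref_gap n w\<bar> \<le> real B" if "w \<in> low_states \<union> high_states" for w
    using that states_disjoint_union accept_prob_bounds[OF valid] accept_prob_bounds[OF valid']
      prior_nonneg abs_pref_gap_le[OF \<open>n < N\<close>] by blast+
  have low: "?gain w \<le> pref_gap n top_low * (P w * max (?a' w - ?a w) 0) + real B * (P w * ?a w)"
    if "w \<in> low_states" for w
  proof -
    have "(?a' w - ?a w) * pref_gap n w \<le> pref_gap n top_low * max (?a' w - ?a w) 0 + real B * ?a w"
      using state[of w] that pref_gap_mono[OF \<open>n < N\<close>, of w top_low] states_split
      by (intro acceptance_gain_le) auto
    from mult_left_mono[OF this, of "P w"] show ?thesis
      using state[of w] that by (simp add: algebra_simps)
  qed
  have high: "?gain w \<le> - pref_gap n (Suc top_low) * (P w * max (?a w - ?a' w) 0)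
                        + real B * (P w * (1 - ?a w))"
    if "w \<in> high_states" for w
  proof -
    have "((1 - ?a' w) - (1 - ?a w)) * - pref_gap n w
            \<le> - pref_gap n (Suc top_low) * max ((1 - ?a' w) - (1 - ?a w)) 0 + real B * (1 - ?a w)"
      using state[of w] that pref_gap_mono[OF \<open>n < N\<close>, of "Suc top_low" w] states_split
      by (intro acceptance_gain_le) auto
    from mult_left_mono[OF this, of "P w"] show ?thesis
      using state[of w] that by (simp add: algebra_simps)
  qed
  have "util Sg' n - util Sg n = (\<Sum>w\<in>low_states. ?gain w) + (\<Sum>w\<in>high_states. ?gain w)"
    unfolding exp_util_diff pref_gap_def[symmetric] states_disjoint_union(1)
    by (rule sum.union_disjoint) (simp_all add: states_split states_disjoint_union(2))
  also have "\<dots> \<le> (\<Sum>w\<in>low_states. pref_gap n top_low * (P w * max (?a' w - ?a w) 0)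
                                     + real B * (P w * ?a w))
                 + (\<Sum>w\<in>high_states. - pref_gap n (Suc top_low) * (P w * max (?a w - ?a' w) 0)
                                     + real B * (P w * (1 - ?a w)))"
    using low high by (intro add_mono sum_mono) auto
  also have "\<dots> = pref_gap n top_low * accept_rise Sg Sg'
                 - pref_gap n (Suc top_low) * accept_drop Sg Sg' + real B * error_prob Sg"
    unfolding accept_rise_def accept_drop_def error_prob_def sum.distrib sum_distrib_left[symmetric]
    by (simp add: algebra_simps)
  finally show ?thesis .
qed

lemma voteA_prob_const:
  assumes "\<forall>m\<in>{1..M}. Sg n m = c" "w \<in> {1..W}"
  shows "voteA_prob M Ps Sg n w = c"
  using assms signal_sum[of w] unfolding voteA_prob_def by (simp add: sum_distrib_right[symmetric])

lemma friendly_coalition_accept_rise_eq_0: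
  assumes regular: "regular_profile N mu W M alphaA v Sg" and valid': "valid_profile N M Sg'"
    and agree: "\<forall>n<N. n \<notin> D \<longrightarrow> (\<forall>m\<in>{1..M}. Sg' n m = Sg n m)"
    and friendly: "\<And>n. n < N \<Longrightarrow> n \<in> D \<Longrightarrow> friendly mu W alphaA v n"
  shows "accept_rise Sg Sg' = 0"
proof -
  have valid: "valid_profile N M Sg"
    using regular unfolding regular_profile_def by simp
  have "accept_prob Sg' w \<le> accept_prob Sg w" if w: "w \<in> {1..W}" for w
  proof (rule lamA_mono[OF valid' valid])
    fix n assume "n < N"
    show "voteA_prob M Ps Sg' n w \<le> voteA_prob M Ps Sg n w"
    proof (cases "n \<in> D")
      case True
      then have "voteA_prob M Ps Sg n w = 1"
        using regular friendly \<open>n < N\<close> w unfolding regular_profile_def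
        by (intro voteA_prob_const) auto
      then show ?thesis
        using voteA_prob_bounds[OF valid'] signal_nonneg signal_sum \<open>n < N\<close> w by auto
    next
      case False
      then show ?thesis
        using agree \<open>n < N\<close> unfolding voteA_prob_def by simp
    qed
  qed (use signal_nonneg signal_sum w in auto)
  then have "\<forall>w\<in>low_states. max (accept_prob Sg' w - accept_prob Sg w) 0 = 0"
    unfolding low_states_def by auto
  then show ?thesis
    unfolding accept_rise_def by simp
qed

lemma unfriendly_coalition_accept_drop_eq_0:
  assumes regular: "regular_profile N mu W M alphaA v Sg" and valid': "valid_profile N M Sg'"
    and agree: "\<forall>n<N. n \<notin> D \<longrightarrow> (\<forall>m\<in>{1..M}. Sg' n m = Sg n m)"
    and unfriendly: "\<And>n. n < N \<Longrightarrow> n \<in> D \<Longrightarrow> unfriendly mu W alphaA v n"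
  shows "accept_drop Sg Sg' = 0"
proof -
  have valid: "valid_profile N M Sg"
    using regular unfolding regular_profile_def by simp
  have "accept_prob Sg w \<le> accept_prob Sg' w" if w: "w \<in> {1..W}" for w
  proof (rule lamA_mono[OF valid valid'])
    fix n assume "n < N"
    show "voteA_prob M Ps Sg n w \<le> voteA_prob M Ps Sg' n w"
    proof (cases "n \<in> D")
      case True
      then have "voteA_prob M Ps Sg n w = 0"
        using regular unfriendly \<open>n < N\<close> w unfolding regular_profile_def
        by (intro voteA_prob_const) auto
      then show ?thesis
        using voteA_prob_bounds[OF valid'] signal_nonneg signal_sum \<open>n < N\<close> w by auto
    next
      case False
      then show ?thesis
        using agree \<open>n < N\<close> unfolding voteA_prob_def by simp
    qed
  qed (use signal_nonneg signal_sum w in auto)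
  then have "\<forall>w\<in>high_states. max (accept_prob Sg w - accept_prob Sg' w) 0 = 0"
    unfolding high_states_def by auto
  then show ?thesis
    unfolding accept_drop_def by simp
qed

lemma coalition_gain_le:
  assumes regular: "regular_profile N mu W M alphaA v Sg"
    and D: "D \<subseteq> {0..<N}" and valid': "valid_profile N M Sg'"
    and agree: "\<forall>n<N. n \<notin> D \<longrightarrow> (\<forall>m\<in>{1..M}. Sg' n m = Sg n m)"
    and no_loss: "\<forall>n\<in>D. util Sg n \<le> util Sg' n"
    and "g \<in> D"
  shows "util Sg' g - util Sg g \<le> (real B + 1) * (real B * error_prob Sg)"
proof -
  define x where "x = accept_rise Sg Sg'"
  define y where "y = accept_drop Sg Sg'"
  define c where "c = real B * error_prob Sg"
  define a where "a = (\<lambda>n. pref_gap n top_low)"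
  define a' where "a' = (\<lambda>n. pref_gap n (Suc top_low))"
  have valid: "valid_profile N M Sg"
    using regular unfolding regular_profile_def by simp
  have nonneg: "0 \<le> x" "0 \<le> y" "0 \<le> c"
    unfolding x_def y_def c_def accept_rise_def accept_drop_def
    using prior_nonneg error_prob_nonneg[OF valid] states_subset
    by (auto intro!: sum_nonneg mult_nonneg_nonneg)
  have gain_le: "util Sg' n - util Sg n \<le> a n * x - a' n * y + c" if "n \<in> D" for n
    unfolding a_def a'_def x_def y_def c_def using util_gain_le[OF valid valid'] that D by auto
  have partner: "0 \<le> a n * x - a' n * y + c" if "n \<in> D" for n
    using gain_le[OF that] no_loss that by fastforce
  have mono: "a n \<le> a' n" and gap: "1 \<le> \<bar>a n\<bar> \<and> \<bar>a n\<bar> \<le> B" "1 \<le> \<bar>a' n\<bar> \<and> \<bar>a' n\<bar> \<le> B"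
    if "n \<in> D" for n
    unfolding a_def a'_def using that D states_split
    by (auto intro!: pref_gap_mono one_le_abs_pref_gap abs_pref_gap_le)
  have no_rise: "x = 0" if "\<forall>n\<in>D. 0 < a n"
    unfolding x_def using that D friendly_iff unfolding a_def
    by (intro friendly_coalition_accept_rise_eq_0[OF regular valid' agree]) auto
  have no_drop: "y = 0" if "\<forall>n\<in>D. - a' n > 0"
    unfolding y_def using that D unfriendly_iff unfolding a'_def
    by (intro unfriendly_coalition_accept_drop_eq_0[OF regular valid' agree]) auto
  consider "0 < a g" | "0 < - a' g" | "a g \<le> 0" "0 \<le> a' g"
    by linarith
  then have "a g * x - a' g * y + c \<le> (real B + 1) * c"
  proof cases
    case 1
    show ?thesis
      using mono gap(1) partner no_rise nonneg \<open>g \<in> D\<close> 1 by (rule friendly_deviator_bound)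
  next
    case 2
    \<comment> \<open>the unfriendly case is the friendly one with the roles of A and R exchanged\<close>
    have "(- a' g) * y - (- a g) * x + c \<le> (real B + 1) * c"
      using 2 mono gap(2) partner no_drop nonneg \<open>g \<in> D\<close>
      by (intro friendly_deviator_bound[where a = "\<lambda>n. - a' n" and a' = "\<lambda>n. - a n"]) auto
    then show ?thesis
      by simp
  next
    case 3
    then have "a g * x \<le> 0" "0 \<le> a' g * y"
      using nonneg by (simp_all add: mult_nonpos_nonneg)
    moreover have "0 \<le> real B * c"
      using nonneg by simp
    ultimately show ?thesis
      by (simp add: algebra_simps)
  qed
  then show ?thesis
    using gain_le[OF \<open>g \<in> D\<close>] unfolding c_def by linarith
qed

end

theorem lemma2:
  fixes N W M B :: nat and mu e :: real
    and P :: "nat \<Rightarrow> real" and Ps :: "nat \<Rightarrow> nat \<Rightarrow> real"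
    and v :: "nat \<Rightarrow> nat \<Rightarrow> outcome \<Rightarrow> nat" and alphaA :: "nat \<Rightarrow> real"
    and Sg :: "nat \<Rightarrow> nat \<Rightarrow> real"
  assumes W_pos: "W \<ge> 1" and M_pos: "M \<ge> 1" and N_pos: "N \<ge> 1" and B_pos: "B \<ge> 1"
    and prior_pos: "\<forall>w\<in>{1..W}. P w > 0"
    and prior_sum: "(\<Sum>w\<in>{1..W}. P w) = 1"
    and sig_nonneg: "\<forall>w\<in>{1..W}. \<forall>m\<in>{1..M}. Ps m w \<ge> 0"
    and sig_sum: "\<forall>w\<in>{1..W}. (\<Sum>m\<in>{1..M}. Ps m w) = 1"
    and stoch_dom: "\<forall>w1\<in>{1..W}. \<forall>w2\<in>{1..W}. w1 > w2 \<longrightarrow>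
        (\<forall>m\<in>{2..M}. (\<Sum>k\<in>{m..M}. Ps k w1) > (\<Sum>k\<in>{m..M}. Ps k w2))"
    and mu_range: "0 < mu" "mu < 1"
    and v_bound: "\<forall>n<N. \<forall>w\<in>{1..W}. \<forall>x. v n w x \<le> B"
    and vA_incr: "\<forall>n<N. \<forall>w1\<in>{1..W}. \<forall>w2\<in>{1..W}. w1 < w2 \<longrightarrow> v n w1 Acc < v n w2 Acc"
    and vR_decr: "\<forall>n<N. \<forall>w1\<in>{1..W}. \<forall>w2\<in>{1..W}. w1 < w2 \<longrightarrow> v n w1 Rej > v n w2 Rej"
    and v_neq: "\<forall>n<N. \<forall>w\<in>{1..W}. v n w Acc \<noteq> v n w Rej"
    and alpha_count: "\<forall>w\<in>{1..W}.
        card {n\<in>{0..<N}. v n w Rej > v n w Acc} = nat \<lfloor>(1 - alphaA w) * real N\<rfloor>"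
    and alpha_neq: "\<forall>w\<in>{1..W}. alphaA w \<noteq> mu"
    and alpha_round: "\<forall>w\<in>{1..W}.
        (real (N - nat \<lfloor>(1 - alphaA w) * real N\<rfloor>) \<ge> mu * real N) \<longleftrightarrow> alphaA w > mu"
    and L_nonempty: "\<exists>w\<in>{1..W}. alphaA w < mu"
    and H_nonempty: "\<exists>w\<in>{1..W}. alphaA w > mu"
    and few_friendly: "real (card {n\<in>{0..<N}. friendly mu W alphaA v n}) < mu * real N"
    and few_unfriendly: "real (card {n\<in>{0..<N}. unfriendly mu W alphaA v n}) < (1 - mu) * real N"
    and regular: "regular_profile N mu W M alphaA v Sg"
    and fid: "fidelity N mu W M P Ps alphaA Sg \<ge> 1 - e"
  shows "strong_BNE (real W * real B * ((real W - 1) * real B + 1) * e) N mu W M P Ps v Sg"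
proof -
  interpret voting_game N W M B mu P Ps v alphaA
  proof unfold_locales
    fix n w x m
    assume "w \<in> {1..W}"
    then show "0 \<le> P w" "alphaA w \<noteq> mu"
      and "m \<in> {1..M} \<Longrightarrow> 0 \<le> Ps m w" "(\<Sum>m\<in>{1..M}. Ps m w) = 1"
      and "n < N \<Longrightarrow> v n w x \<le> B" "n < N \<Longrightarrow> v n w Acc \<noteq> v n w Rej"
      and "card {n\<in>{0..<N}. v n w Rej > v n w Acc} = nat \<lfloor>(1 - alphaA w) * real N\<rfloor>"
      and "mu * real N \<le> real (N - nat \<lfloor>(1 - alphaA w) * real N\<rfloor>) \<longleftrightarrow> mu < alphaA w"
      using prior_pos sig_nonneg sig_sum v_bound v_neq alpha_count alpha_neq alpha_round
      by (simp_all add: less_imp_le)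
  next
    fix n w1 w2
    assume "n < N" "w1 \<in> {1..W}" "w2 \<in> {1..W}" "w1 < w2"
    then show "v n w1 Acc < v n w2 Acc" "v n w2 Rej < v n w1 Rej"
      using vA_incr vR_decr by blast+
  qed (use prior_sum L_nonempty H_nonempty in auto)
  have valid: "valid_profile N M Sg"
    using regular unfolding regular_profile_def by simp
  have error: "0 \<le> error_prob Sg" "error_prob Sg \<le> e"
    using error_prob_nonneg[OF valid] fid fidelity_eq_1_minus_error_prob by auto
  have "2 \<le> W"
    using states_split by linarith
  then have coefficient: "(real B + 1) * real B \<le> real W * real B * ((real W - 1) * real B + 1)"
    by (rule bound_le_epsilon_coefficient)
  have "(real B + 1) * real B * error_prob Sg \<le> real W * real B * ((real W - 1) * real B + 1) * e"
    by (rule mult_mono) (use coefficient error order_trans[OF _ coefficient] in auto)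
  then show ?thesis
    unfolding strong_BNE_def using coalition_gain_le[OF regular]
    by (smt (verit) mult.assoc)
qed

end
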